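(* Let $n=2p+1$ agents choose between two options $A=\{a,b\}$, each agent having a strict preference over $A$, and let preferences over lotteries be given by stochastic dominance. Then the Bloc formation mechanism $\chi_{BF}$ Nash implements the majority rule: for every preference profile $R$, every Nash equilibrium $m$ of $\chi_{BF}$ at $R$ satisfies $\chi_{BF}(m)=Maj(R)$ (the degenerate lottery on $Maj(R)$), and there exists a Nash equilibrium $m$ at $R$ with $\chi_{BF}(m)=Maj(R)$.
   Context: Agents: $I=\{1,\dots,n\}$ with $n=2p+1$, $p\ge 1$. Options $A=\{a,b\}$. A preference profile $R=(R_1,\dots,R_n)$ assigns to each agent a strict preference over $A$. The majority rule is $Maj(R)=a$ if $|\{i: a\,R_i\,b\}|\ge p+1$ and $Maj(R)=b$ otherwise. $\Delta$ is the set of lotteries over $A$. Stochastic dominance (SD): agent $i$ whose preferred option is $x$ weakly prefers lottery $\beta$ to $\eta$ iff $\beta(x)\ge\eta(x)$, and strictly prefers iff $\beta(x)>\eta(x)$. A mechanism $g:\prod_i M_i\to\Delta$ Nash implements a social choice function $f$ if for every $R$ every Nash equilibrium (with respect to SD preferences) has outcome $f(R)$ and some Nash equilibrium has outcome $f(R)$. Bloc formation mechanism: each agent's message is $m_i=(v_i,c_i)$, where $v_i\in A$ is a vote and $c_i$ is a set of exactly $p$ agents not containing $i$ (her nominations). For $x\in A$, a set $B\subseteq I$ with $|B|\ge p+1$ is a bloc in favor of $x$ in $m$ if $v_i=x$ and $c_i\subseteq B$ for all $i\in B$. (All blocs in a profile favor the same option.) If $m$ admits a bloc in favor of $x$, then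 $\chi_{BF}(m)=x$. Otherwise $\chi_{BF}(m)=\eta(m)$, the lottery with $\eta^x(m)=\sum_{i\in I}\eta_i(m)\mathbf{1}\{v_i=x\}$, where $\eta_i(m)=|\{j\in I\setminus\{i\}: i\in c_j\}|/(np)$. *)

theory Defs
  imports Complex_Main
begin

datatype opt = OA | OB

definition agents :: "nat \<Rightarrow> nat set" where
  "agents p = {..<2*p+1}"

definition strict_pref :: "(opt \<times> opt) set \<Rightarrow> bool" where
  "strict_pref P \<longleftrightarrow> P = {(OA,OB)} \<or> P = {(OB,OA)}"

definition profile :: "nat \<Rightarrow> (nat \<Rightarrow> (opt \<times> opt) set) \<Rightarrow> bool" where
  "profile p R \<longleftrightarrow> (\<forall>i\<in>agents p. strict_pref (R i))"

definition top :: "(opt \<times> opt) set \<Rightarrow> opt" where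
  "top P = (if (OA,OB) \<in> P then OA else OB)"

definition Maj :: "nat \<Rightarrow> (nat \<Rightarrow> (opt \<times> opt) set) \<Rightarrow> opt" where
  "Maj p R = (if card {i\<in>agents p. (OA,OB) \<in> R i} \<ge> p+1 then OA else OB)"

type_synonym lottery = "opt \<Rightarrow> real"

definition degen :: "opt \<Rightarrow> lottery" where
  "degen x = (\<lambda>y. if y = x then 1 else 0)"

text \<open>Messages: a vote and a set of nominations.\<close>
type_synonym message = "opt \<times> nat set"

definition msg_space :: "nat \<Rightarrow> nat \<Rightarrow> message set" where
  "msg_space p i = {(v,c). c \<subseteq> agents p - {i} \<and> card c = p}"

definition valid_msgs :: "nat \<Rightarrow> (nat \<Rightarrow> message) \<Rightarrow> bool" where
  "valid_msgs p m \<longleftrightarrow> (\<forall>i\<in>agents p. m i \<in> msg_space p i)"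

definition is_bloc :: "nat \<Rightarrow> (nat \<Rightarrow> message) \<Rightarrow> opt \<Rightarrow> nat set \<Rightarrow> bool" where
  "is_bloc p m x B \<longleftrightarrow> B \<subseteq> agents p \<and> card B \<ge> p+1 \<and>
     (\<forall>i\<in>B. fst (m i) = x \<and> snd (m i) \<subseteq> B)"

definition eta_i :: "nat \<Rightarrow> (nat \<Rightarrow> message) \<Rightarrow> nat \<Rightarrow> real" where
  "eta_i p m i = real (card {j \<in> agents p - {i}. i \<in> snd (m j)}) / real ((2*p+1) * p)"

definition eta :: "nat \<Rightarrow> (nat \<Rightarrow> message) \<Rightarrow> lottery" where
  "eta p m = (\<lambda>x. \<Sum>i\<in>{i\<in>agents p. fst (m i) = x}. eta_i p m i)"

definition chi_BF :: "nat \<Rightarrow> (nat \<Rightarrow> message) \<Rightarrow> lottery" where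
  "chi_BF p m = (if \<exists>x B. is_bloc p m x B
                 then degen (SOME x. \<exists>B. is_bloc p m x B)
                 else eta p m)"

text \<open>Nash equilibrium w.r.t. SD preferences: no agent has a unilateral deviation
  yielding an SD-strictly preferred lottery, i.e. strictly higher probability of her top option.\<close>
definition nash_eq :: "nat \<Rightarrow> (nat \<Rightarrow> (opt \<times> opt) set) \<Rightarrow> (nat \<Rightarrow> message) \<Rightarrow> bool" where
  "nash_eq p R m \<longleftrightarrow> valid_msgs p m \<and>
     (\<forall>i\<in>agents p. \<forall>mi\<in>msg_space p i.
        \<not> (chi_BF p (m(i := mi)) (top (R i)) > chi_BF p m (top (R i))))"

end

theory Submission imports Defs begin

(* Without a bloc, option z gets probability proportional to the number of nominations
   received by its voters, and this number stays below the total n p.  In an equilibrium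
   without a bloc, voting for one's top option can therefore never raise the nominations of
   its voters (a bloc created this way would favour that option and give it probability 1).
   Hence every nominated agent votes for her top option, and an agent whose side has at
   least p other voters nominates only within her side, since otherwise she could trade a
   nominee.  The side with a majority of voters receives some nomination, and its sincere
   members then form a bloc: a contradiction.  So every equilibrium has a bloc.  If it
   favoured the minority option, a majority supporter in a minimal such bloc, who is
   nominated by a fellow member, would gain by switching her vote: either a bloc containing
   her forms, or her top option gets positive probability.  Conversely, p + 1 majority
   supporters nominating each other form a bloc that no single agent can break or beat. *)

abbreviation has_bloc :: "nat \<Rightarrow> (nat \<Rightarrow> message) \<Rightarrow> bool" where
  "has_bloc p m \<equiv> \<exists>x B. is_bloc p m x B"

definition voters :: "nat \<Rightarrow> (nat \<Rightarrow> message) \<Rightarrow> opt \<Rightarrow> nat set" where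
  "voters p m z = {i\<in>agents p. fst (m i) = z}"

definition nomination_count :: "nat \<Rightarrow> (nat \<Rightarrow> message) \<Rightarrow> nat set \<Rightarrow> nat" where
  "nomination_count p m S = (\<Sum>a\<in>agents p. card (snd (m a) \<inter> S))"

lemma finite_agents [simp]: "finite (agents p)"
  by (simp add: agents_def)

lemma card_agents [simp]: "card (agents p) = 2*p+1"
  by (simp add: agents_def)

lemma zero_in_agents: "0 \<in> agents p"
  by (simp add: agents_def)

lemma valid_msgsD:
  assumes "valid_msgs p m" "i \<in> agents p"
  shows "snd (m i) \<subseteq> agents p - {i}" "card (snd (m i)) = p" "finite (snd (m i))"
proof -
  have "m i \<in> msg_space p i" using assms by (simp add: valid_msgs_def)
  then show sub: "snd (m i) \<subseteq> agents p - {i}" and "card (snd (m i)) = p"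
    by (cases "m i", simp add: msg_space_def)+
  from sub show "finite (snd (m i))" by (simp add: finite_subset)
qed

lemma valid_msgs_fun_upd:
  "valid_msgs p m \<Longrightarrow> mi \<in> msg_space p i \<Longrightarrow> valid_msgs p (m(i := mi))"
  by (auto simp: valid_msgs_def)

lemma voters_subset_agents: "voters p m z \<subseteq> agents p"
  by (auto simp: voters_def)

lemma voters_fun_upd_same:
  "i \<in> agents p \<Longrightarrow> voters p (m(i := (z, c))) z = insert i (voters p m z)"
  by (auto simp: voters_def)

lemma voters_other: "z \<noteq> w \<Longrightarrow> voters p m w = agents p - voters p m z"
  by (cases z; cases w) (auto simp: voters_def intro: opt.exhaust)

lemma card_voters_other: "z \<noteq> w \<Longrightarrow> card (voters p m w) = 2*p+1 - card (voters p m z)"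
  using card_Diff_subset[OF finite_subset[OF voters_subset_agents finite_agents] voters_subset_agents]
  by (simp add: voters_other)

lemma nomination_count_mono:
  assumes "valid_msgs p m" "S \<subseteq> T"
  shows "nomination_count p m S \<le> nomination_count p m T"
  unfolding nomination_count_def
  using assms valid_msgsD(3) by (intro sum_mono card_mono) auto

lemma nomination_count_strict_mono:
  assumes v: "valid_msgs p m" and "S \<subseteq> T" and a: "a \<in> agents p"
    and "k \<in> snd (m a)" "k \<in> T" "k \<notin> S"
  shows "nomination_count p m S < nomination_count p m T"
  unfolding nomination_count_def
proof (rule sum_strict_mono_ex1)
  show "\<forall>b\<in>agents p. card (snd (m b) \<inter> S) \<le> card (snd (m b) \<inter> T)"
    using assms valid_msgsD(3)[OF v] by (intro ballI card_mono) auto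
  have "snd (m a) \<inter> S \<subset> snd (m a) \<inter> T" using assms by blast
  then show "\<exists>b\<in>agents p. card (snd (m b) \<inter> S) < card (snd (m b) \<inter> T)"
    using a valid_msgsD(3)[OF v a] by (meson finite_Int psubset_card_mono)
qed simp

lemma nomination_count_Diff:
  assumes v: "valid_msgs p m"
  shows "nomination_count p m S + nomination_count p m (agents p - S) = (2*p+1)*p"
proof -
  have "card (snd (m a) \<inter> S) + card (snd (m a) \<inter> (agents p - S)) = p" if a: "a \<in> agents p" for a
  proof -
    have "snd (m a) \<inter> (agents p - S) = snd (m a) - S" using valid_msgsD(1)[OF v a] by blast
    then show ?thesis using card_Int_Diff[OF valid_msgsD(3)[OF v a], of S] valid_msgsD(2)[OF v a]
      by simp
  qed
  then show ?thesis by (simp add: nomination_count_def flip: sum.distrib)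
qed

lemma nomination_count_le:
  "valid_msgs p m \<Longrightarrow> nomination_count p m S \<le> (2*p+1)*p"
  using nomination_count_Diff[of p m S] by simp

lemma nomination_count_full_imp_subset:
  assumes v: "valid_msgs p m" and full: "(2*p+1)*p \<le> nomination_count p m S"
    and a: "a \<in> agents p"
  shows "snd (m a) \<subseteq> S"
proof -
  have "nomination_count p m (agents p - S) = 0" using nomination_count_Diff[OF v, of S] full by simp
  then have "snd (m a) \<inter> (agents p - S) = {}"
    using a valid_msgsD(3)[OF v a] by (simp add: nomination_count_def)
  then show ?thesis using valid_msgsD(1)[OF v a] by blast
qed

lemma nomination_count_fun_upd:
  assumes "i \<in> agents p"
  shows "nomination_count p (m(i := mi)) S + card (snd (m i) \<inter> S)
           = nomination_count p m S + card (snd mi \<inter> S)"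
  using assms by (simp add: nomination_count_def sum.remove)

lemma card_nominators_sum:
  assumes v: "valid_msgs p m" and V: "V \<subseteq> agents p"
  shows "(\<Sum>i\<in>V. card {j\<in>agents p - {i}. i \<in> snd (m j)}) = nomination_count p m V"
proof -
  have nominators: "{j\<in>agents p - {i}. i \<in> snd (m j)} = {j\<in>agents p. i \<in> snd (m j)}" for i
    using valid_msgsD(1)[OF v] by blast
  have nominees: "{i\<in>V. i \<in> snd (m j)} = snd (m j) \<inter> V" for j
    by blast
  have "finite V" using V by (simp add: finite_subset)
  from sum.swap_restrict[OF this finite_agents[of p],
      where g = "\<lambda>_ _. 1::nat" and R = "\<lambda>i j. i \<in> snd (m j)"]
  show ?thesis
    unfolding nominators nomination_count_def nominees[symmetric] by (simp flip: card_eq_sum)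
qed

lemma eta_eq_nomination_count:
  assumes "valid_msgs p m"
  shows "eta p m z = real (nomination_count p m (voters p m z)) / real ((2*p+1)*p)"
proof -
  have "eta p m z = (\<Sum>i\<in>voters p m z. real (card {j\<in>agents p - {i}. i \<in> snd (m j)}))
                      / real ((2*p+1)*p)"
    by (simp add: eta_def eta_i_def voters_def sum_divide_distrib)
  then show ?thesis
    by (simp only: card_nominators_sum[OF assms voters_subset_agents] flip: of_nat_sum)
qed

lemma card_ge_if_nominations_within:
  assumes v: "valid_msgs p m" and "i \<in> B" "B \<subseteq> agents p" "snd (m i) \<subseteq> B"
  shows "p + 1 \<le> card B"
proof -
  have i: "i \<in> agents p" using assms by blast
  have fB: "finite B" using assms(3) by (simp add: finite_subset)
  have "snd (m i) \<subseteq> B - {i}" using valid_msgsD(1)[OF v i] assms(4) by blast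
  then have "p \<le> card (B - {i})" using valid_msgsD(2)[OF v i] fB by (metis card_mono finite_Diff)
  then show ?thesis using card.remove[OF fB \<open>i \<in> B\<close>] by simp
qed

lemma is_bloc_iff:
  assumes "valid_msgs p m"
  shows "is_bloc p m x B \<longleftrightarrow>
           B \<subseteq> agents p \<and> B \<noteq> {} \<and> (\<forall>i\<in>B. fst (m i) = x \<and> snd (m i) \<subseteq> B)"
  using card_ge_if_nominations_within[OF assms] unfolding is_bloc_def by fastforce

lemma majorities_intersect:
  assumes "B1 \<subseteq> agents p" "B2 \<subseteq> agents p" "p + 1 \<le> card B1" "p + 1 \<le> card B2"
  shows "B1 \<inter> B2 \<noteq> {}"
proof
  assume "B1 \<inter> B2 = {}"
  then have "card (B1 \<union> B2) = card B1 + card B2"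
    using assms(1,2) by (simp add: card_Un_disjoint finite_subset)
  moreover have "card (B1 \<union> B2) \<le> 2*p+1"
    using assms(1,2) by (metis Un_subset_iff card_agents card_mono finite_agents)
  ultimately show False using assms(3,4) by simp
qed

lemma is_bloc_same_option:
  assumes "is_bloc p m x B1" "is_bloc p m y B2"
  shows "x = y"
proof -
  have "B1 \<inter> B2 \<noteq> {}"
    using assms by (intro majorities_intersect) (auto simp: is_bloc_def)
  then obtain i where "i \<in> B1" "i \<in> B2" by blast
  with assms show ?thesis unfolding is_bloc_def by auto
qed

lemma is_bloc_Int:
  assumes "valid_msgs p m" "is_bloc p m x B1" "is_bloc p m x B2"
  shows "is_bloc p m x (B1 \<inter> B2)"
proof -
  have "B1 \<inter> B2 \<noteq> {}"
    using assms by (intro majorities_intersect) (auto simp: is_bloc_def)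
  with assms show ?thesis unfolding is_bloc_iff[OF assms(1)] by blast
qed

lemma is_bloc_fun_upd_cases:
  assumes "is_bloc p (m(i := (z, c))) x B"
  shows "i \<in> B \<and> x = z \<or> i \<notin> B \<and> is_bloc p m x B"
proof (cases "i \<in> B")
  case True
  with assms show ?thesis by (auto simp: is_bloc_def)
next
  case False
  then have "\<forall>j\<in>B. (m(i := (z, c))) j = m j" by auto
  with False assms show ?thesis unfolding is_bloc_def by auto
qed

lemma chi_BF_bloc:
  assumes "is_bloc p m x B"
  shows "chi_BF p m = degen x"
proof -
  have "(SOME x. \<exists>B. is_bloc p m x B) = x"
    using assms is_bloc_same_option by blast
  with assms show ?thesis unfolding chi_BF_def by auto
qed

lemma chi_BF_no_bloc: "\<not> has_bloc p m \<Longrightarrow> chi_BF p m = eta p m"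
  unfolding chi_BF_def by (rule if_not_P)

lemma total_nominations_pos: "p \<ge> 1 \<Longrightarrow> 0 < real ((2*p+1)*p)"
  by (simp only: of_nat_0_less_iff) simp

lemma no_bloc_nomination_count_less:
  assumes v: "valid_msgs p m" and p: "p \<ge> 1" and nb: "\<not> has_bloc p m"
  shows "nomination_count p m (voters p m z) < (2*p+1)*p"
proof (rule ccontr)
  assume "\<not> ?thesis"
  then have within: "snd (m a) \<subseteq> voters p m z" if "a \<in> agents p" for a
    using nomination_count_full_imp_subset[OF v _ that] by simp
  have "snd (m 0) \<noteq> {}" using valid_msgsD(2)[OF v zero_in_agents] p by auto
  then have "voters p m z \<noteq> {}" using within[OF zero_in_agents] by blast
  then have "is_bloc p m z (voters p m z)"
    unfolding is_bloc_iff[OF v] using within by (auto simp: voters_def)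
  with nb show False by blast
qed

lemma chi_BF_no_bloc_less_1:
  assumes "valid_msgs p m" "p \<ge> 1" "\<not> has_bloc p m"
  shows "chi_BF p m z < 1"
proof -
  have "real (nomination_count p m (voters p m z)) < real ((2*p+1)*p)"
    using no_bloc_nomination_count_less[OF assms] by (simp only: of_nat_less_iff)
  then show ?thesis
    by (simp only: chi_BF_no_bloc[OF assms(3)] eta_eq_nomination_count[OF assms(1)]
        divide_less_eq_1_pos[OF total_nominations_pos[OF assms(2)]])
qed

lemma chi_BF_le_1:
  assumes v: "valid_msgs p m" and p: "p \<ge> 1"
  shows "chi_BF p m z \<le> 1"
proof (cases "has_bloc p m")
  case True
  then show ?thesis using chi_BF_bloc by (auto simp: degen_def)
next
  case False
  have "real (nomination_count p m (voters p m z)) \<le> real ((2*p+1)*p)"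
    using nomination_count_le[OF v] by (simp only: of_nat_le_iff)
  then show ?thesis
    by (simp only: chi_BF_no_bloc[OF False] eta_eq_nomination_count[OF v]
        divide_le_eq_1_pos[OF total_nominations_pos[OF p]])
qed

lemma eta_pos:
  assumes v: "valid_msgs p m" and p: "p \<ge> 1" and j: "j \<in> agents p"
    and "i \<in> snd (m j)" "fst (m i) = x"
  shows "0 < eta p m x"
proof -
  have "i \<in> agents p" using valid_msgsD(1)[OF v j] assms(4) by blast
  then have "nomination_count p m {} < nomination_count p m (voters p m x)"
    using assms by (intro nomination_count_strict_mono[OF v _ j]) (auto simp: voters_def)
  with total_nominations_pos[OF p] show ?thesis by (simp add: eta_eq_nomination_count[OF v])
qed

lemma nash_eq_valid: "nash_eq p R m \<Longrightarrow> valid_msgs p m"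
  by (simp add: nash_eq_def)

lemma nash_eq_no_improvement:
  "nash_eq p R m \<Longrightarrow> i \<in> agents p \<Longrightarrow> mi \<in> msg_space p i \<Longrightarrow>
     \<not> chi_BF p m (top (R i)) < chi_BF p (m(i := mi)) (top (R i))"
  by (simp add: nash_eq_def)

lemma nash_eq_no_bloc_deviation:
  assumes ne: "nash_eq p R m" and nb: "\<not> has_bloc p m" and p: "p \<ge> 1"
    and i: "i \<in> agents p" and ms: "(top (R i), c) \<in> msg_space p i"
  defines "m' \<equiv> m(i := (top (R i), c))"
  shows "nomination_count p m' (voters p m' (top (R i)))
           \<le> nomination_count p m (voters p m (top (R i)))"
proof -
  let ?z = "top (R i)"
  have v: "valid_msgs p m" using nash_eq_valid[OF ne] .
  have v': "valid_msgs p m'" unfolding m'_def by (rule valid_msgs_fun_upd[OF v ms])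
  have no_gain: "\<not> chi_BF p m ?z < chi_BF p m' ?z"
    unfolding m'_def by (rule nash_eq_no_improvement[OF ne i ms])
  show ?thesis
  proof (cases "has_bloc p m'")
    case True
    then obtain x B where "is_bloc p m' x B" by blast
    then have "chi_BF p m' = degen ?z"
      using is_bloc_fun_upd_cases[of p m i ?z c x B] nb chi_BF_bloc unfolding m'_def by blast
    then show ?thesis using no_gain chi_BF_no_bloc_less_1[OF v p nb] by (simp add: degen_def)
  next
    case False
    then have "eta p m' ?z \<le> eta p m ?z"
      using no_gain by (simp add: chi_BF_no_bloc nb)
    then show ?thesis using total_nominations_pos[OF p]
      by (simp add: eta_eq_nomination_count[OF v] eta_eq_nomination_count[OF v'] divide_le_cancel)
  qed
qed

lemma nash_eq_no_bloc_nominee_votes_top: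
  assumes ne: "nash_eq p R m" and nb: "\<not> has_bloc p m" and p: "p \<ge> 1"
    and a: "a \<in> agents p" and nominated: "i \<in> snd (m a)"
  shows "fst (m i) = top (R i)"
proof (rule ccontr)
  assume insincere: "fst (m i) \<noteq> top (R i)"
  let ?z = "top (R i)"
  let ?m' = "m(i := (?z, snd (m i)))"
  have v: "valid_msgs p m" using nash_eq_valid[OF ne] .
  have i: "i \<in> agents p" using valid_msgsD(1)[OF v a] nominated by blast
  have ms: "(?z, snd (m i)) \<in> msg_space p i" using valid_msgsD[OF v i] by (simp add: msg_space_def)
  have "nomination_count p m (voters p m ?z) < nomination_count p m (insert i (voters p m ?z))"
    using insincere by (intro nomination_count_strict_mono[OF v _ a nominated]) (auto simp: voters_def)
  also have "\<dots> = nomination_count p ?m' (voters p ?m' ?z)"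
    using nomination_count_fun_upd[OF i, of m "(?z, snd (m i))"] by (simp add: voters_fun_upd_same[OF i])
  finally show False using nash_eq_no_bloc_deviation[OF ne nb p i ms] by simp
qed

lemma exchange_into_subset:
  assumes fin: "finite c" and "\<not> c \<subseteq> Z" and "Z' \<subseteq> Z" and room: "card c \<le> card Z'"
  obtains c' where "card c' = card c" "c' \<subseteq> c \<union> Z'" "card (c' \<inter> Z) = Suc (card (c \<inter> Z))"
proof -
  obtain k where k: "k \<in> c" "k \<notin> Z" using assms(2) by blast
  have "\<not> Z' \<subseteq> c - {k}"
  proof
    assume "Z' \<subseteq> c - {k}"
    then have "card Z' \<le> card (c - {k})" using fin by (simp add: card_mono)
    also have "\<dots> < card c" using card_Diff1_less[OF fin k(1)] .
    finally show False using room by simp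
  qed
  then obtain l where l: "l \<in> Z'" "l \<notin> c" using k(2) \<open>Z' \<subseteq> Z\<close> by blast
  show thesis
  proof
    show "card (insert l (c - {k})) = card c" using card_Suc_Diff1[OF fin k(1)] fin l(2) by simp
    show "insert l (c - {k}) \<subseteq> c \<union> Z'" using l(1) by blast
    have "insert l (c - {k}) \<inter> Z = insert l (c \<inter> Z)" using k l \<open>Z' \<subseteq> Z\<close> by blast
    then show "card (insert l (c - {k}) \<inter> Z) = Suc (card (c \<inter> Z))" using fin l(2) by simp
  qed
qed

lemma nash_eq_no_bloc_nominates_own_side:
  assumes ne: "nash_eq p R m" and nb: "\<not> has_bloc p m" and p: "p \<ge> 1"
    and i: "i \<in> agents p" and side: "p \<le> card (voters p m (top (R i)) - {i})"
  shows "snd (m i) \<subseteq> voters p m (top (R i))"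
proof (rule ccontr)
  assume outside: "\<not> ?thesis"
  define z where "z = top (R i)"
  define Z where "Z = voters p m z"
  have v: "valid_msgs p m" using nash_eq_valid[OF ne] .
  obtain c' where c': "card c' = p" "c' \<subseteq> snd (m i) \<union> (Z - {i})"
      and gain: "card (c' \<inter> Z) = Suc (card (snd (m i) \<inter> Z))"
    using exchange_into_subset[OF valid_msgsD(3)[OF v i] outside, of "Z - {i}"] valid_msgsD(2)[OF v i]
      side by (auto simp: Z_def z_def)
  let ?m' = "m(i := (z, c'))"
  have ms: "(z, c') \<in> msg_space p i"
    using c' valid_msgsD(1)[OF v i] voters_subset_agents by (fastforce simp: msg_space_def Z_def)
  have "nomination_count p m Z < nomination_count p ?m' Z"
    using nomination_count_fun_upd[OF i, of m "(z, c')" Z] gain by simp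
  also have "\<dots> \<le> nomination_count p ?m' (voters p ?m' z)"
    using valid_msgs_fun_upd[OF v ms]
    by (rule nomination_count_mono) (auto simp: voters_fun_upd_same[OF i] Z_def)
  also have "\<dots> \<le> nomination_count p m Z"
    using nash_eq_no_bloc_deviation[OF ne nb p i ms[unfolded z_def]] by (simp add: Z_def z_def)
  finally show False by simp
qed

lemma ex_majority_voters: "\<exists>z. p + 1 \<le> card (voters p m z)"
proof (cases "p + 1 \<le> card (voters p m OA)")
  case False
  then have "p + 1 \<le> card (voters p m OB)" using card_voters_other[of OA OB p m] by simp
  then show ?thesis by blast
qed blast

lemma no_bloc_voters_nominated:
  assumes v: "valid_msgs p m" and p: "p \<ge> 1" and nb: "\<not> has_bloc p m"
  obtains a j where "a \<in> agents p" "j \<in> snd (m a)" "j \<in> voters p m z"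
proof -
  obtain w where zw: "z \<noteq> w" by (metis opt.distinct(1))
  have "nomination_count p m (agents p - voters p m z) < (2*p+1)*p"
    using no_bloc_nomination_count_less[OF v p nb, of w] by (simp add: voters_other[OF zw])
  then have "nomination_count p m (voters p m z) \<noteq> 0"
    using nomination_count_Diff[OF v, of "voters p m z"] by simp
  then have "\<exists>a\<in>agents p. snd (m a) \<inter> voters p m z \<noteq> {}"
    by (auto simp: nomination_count_def card_gt_0_iff)
  with that show thesis by blast
qed

lemma nash_eq_has_bloc:
  assumes ne: "nash_eq p R m" and p: "p \<ge> 1"
  shows "has_bloc p m"
proof (rule ccontr)
  assume nb: "\<not> has_bloc p m"
  have v: "valid_msgs p m" using nash_eq_valid[OF ne] .
  obtain z where majority: "p + 1 \<le> card (voters p m z)" using ex_majority_voters by blast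
  define Z where "Z = voters p m z"
  obtain a j where a: "a \<in> agents p" and j: "j \<in> snd (m a)" "j \<in> Z"
    using no_bloc_voters_nominated[OF v p nb] unfolding Z_def by blast
  have sincere: "fst (m k) = top (R k)" if "b \<in> agents p" "k \<in> snd (m b)" for b k
    using nash_eq_no_bloc_nominee_votes_top[OF ne nb p that] .
  define S where "S = {k\<in>Z. top (R k) = z}"
  have "j \<in> S" using sincere[OF a j(1)] j(2) by (simp add: S_def Z_def voters_def)
  moreover have "snd (m s) \<subseteq> S" if s: "s \<in> S" for s
  proof -
    have sZ: "s \<in> Z" "top (R s) = z" and sI: "s \<in> agents p"
      using s voters_subset_agents by (auto simp: S_def Z_def)
    have "card (Z - {s}) = card Z - 1"
      using sZ(1) voters_subset_agents by (simp add: Z_def finite_subset)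
    then have "snd (m s) \<subseteq> Z"
      using nash_eq_no_bloc_nominates_own_side[OF ne nb p sI] majority sZ by (simp add: Z_def)
    then show ?thesis using sincere[OF sI] by (auto simp: S_def Z_def voters_def)
  qed
  ultimately have "is_bloc p m z S"
    unfolding is_bloc_iff[OF v] using voters_subset_agents by (auto simp: S_def Z_def voters_def)
  with nb show False by blast
qed

lemma card_top_Maj: "p + 1 \<le> card {i\<in>agents p. top (R i) = Maj p R}"
proof -
  define Sa where "Sa = {i\<in>agents p. (OA, OB) \<in> R i}"
  have "{i\<in>agents p. top (R i) = OA} = Sa" "{i\<in>agents p. top (R i) = OB} = agents p - Sa"
    by (auto simp: Sa_def top_def)
  moreover have "card (agents p - Sa) = 2*p+1 - card Sa" "card Sa \<le> 2*p+1"
    using card_mono[of "agents p" Sa] by (simp_all add: card_Diff_subset Sa_def)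
  ultimately show ?thesis by (simp add: Maj_def Sa_def[symmetric]) linarith
qed

definition minimal_bloc :: "nat \<Rightarrow> (nat \<Rightarrow> message) \<Rightarrow> opt \<Rightarrow> nat set \<Rightarrow> bool" where
  "minimal_bloc p m x B \<longleftrightarrow> is_bloc p m x B \<and> (\<forall>B'. is_bloc p m x B' \<longrightarrow> card B \<le> card B')"

lemma minimal_bloc_exists:
  assumes "is_bloc p m x B"
  obtains B0 where "minimal_bloc p m x B0"
  using ex_has_least_nat[of "is_bloc p m x" B card] assms unfolding minimal_bloc_def by blast

lemma minimal_bloc_subset:
  assumes v: "valid_msgs p m" and B0: "minimal_bloc p m x B0" and B: "is_bloc p m x B"
  shows "B0 \<subseteq> B"
proof -
  have "is_bloc p m x B0" "finite B0"
    using B0 finite_subset by (auto simp: minimal_bloc_def is_bloc_def)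
  moreover from this have "card B0 \<le> card (B0 \<inter> B)"
    using B0 is_bloc_Int[OF v _ B] unfolding minimal_bloc_def by blast
  ultimately have "B0 \<inter> B = B0" using card_seteq[of B0 "B0 \<inter> B"] by blast
  then show ?thesis by blast
qed

lemma minimal_bloc_member_nominated:
  assumes v: "valid_msgs p m" and p: "p \<ge> 1" and B0: "minimal_bloc p m x B0" and i: "i \<in> B0"
  shows "\<exists>j\<in>B0. i \<in> snd (m j)"
proof (rule ccontr)
  assume unnominated: "\<not> ?thesis"
  have b: "is_bloc p m x B0" and fin: "finite B0"
    using B0 finite_subset by (auto simp: minimal_bloc_def is_bloc_def)
  have "p \<le> card (B0 - {i})" using b i fin by (auto simp: is_bloc_def)
  with p have "card (B0 - {i}) \<noteq> 0" by simp
  then have "B0 - {i} \<noteq> {}" by (metis card.empty)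
  then have "is_bloc p m x (B0 - {i})"
    using b unnominated unfolding is_bloc_iff[OF v] by blast
  then have "card B0 \<le> card (B0 - {i})" using B0 unfolding minimal_bloc_def by blast
  with card_Diff1_less[OF fin i] show False by simp
qed

lemma minimal_bloc_fun_upd:
  assumes v: "valid_msgs p m" and B0: "minimal_bloc p m w B0" and i: "i \<in> B0"
    and b': "is_bloc p (m(i := (z, c))) u B'"
  shows "i \<in> B' \<and> u = z"
proof (rule ccontr)
  assume "\<not> ?thesis"
  then have "i \<notin> B'" and b: "is_bloc p m u B'" using is_bloc_fun_upd_cases[OF b'] by blast+
  moreover have "is_bloc p m w B0" using B0 by (simp add: minimal_bloc_def)
  with b have "u = w" using is_bloc_same_option by blast
  ultimately show False using minimal_bloc_subset[OF v B0] i by blast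
qed

lemma nash_eq_bloc_Maj:
  assumes ne: "nash_eq p R m" and p: "p \<ge> 1" and b: "is_bloc p m w B"
  shows "w = Maj p R"
proof (rule ccontr)
  assume minority: "w \<noteq> Maj p R"
  let ?x = "Maj p R"
  have v: "valid_msgs p m" using nash_eq_valid[OF ne] .
  obtain B0 where B0: "minimal_bloc p m w B0" using minimal_bloc_exists[OF b] .
  then have b0: "is_bloc p m w B0" by (simp add: minimal_bloc_def)
  obtain i where i: "i \<in> B0" "top (R i) = ?x"
    using majorities_intersect[OF _ _ _ card_top_Maj, of B0 p R] b0 by (auto simp: is_bloc_def)
  obtain j where j: "j \<in> B0" "i \<in> snd (m j)"
    using minimal_bloc_member_nominated[OF v p B0 i(1)] by blast
  have iI: "i \<in> agents p" and jI: "j \<in> agents p" using i(1) j(1) b0 by (auto simp: is_bloc_def)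
  let ?m' = "m(i := (?x, snd (m i)))"
  have ms: "(?x, snd (m i)) \<in> msg_space p i" using valid_msgsD[OF v iI] by (simp add: msg_space_def)
  have "chi_BF p m ?x = 0" using chi_BF_bloc[OF b0] minority by (simp add: degen_def)
  moreover have "0 < chi_BF p ?m' ?x"
  proof (cases "has_bloc p ?m'")
    case True
    then obtain u B' where b': "is_bloc p ?m' u B'" by blast
    then have "u = ?x" using minimal_bloc_fun_upd[OF v B0 i(1)] by blast
    then show ?thesis using chi_BF_bloc[OF b'] by (simp add: degen_def)
  next
    case False
    have "j \<noteq> i" using valid_msgsD(1)[OF v jI] j(2) by blast
    then have "0 < eta p ?m' ?x"
      using j(2) by (intro eta_pos[OF valid_msgs_fun_upd[OF v ms] p jI]) auto
    then show ?thesis by (simp add: chi_BF_no_bloc[OF False])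
  qed
  ultimately show False using nash_eq_no_improvement[OF ne iI ms] i(2) by simp
qed

lemma nash_eq_exists:
  assumes p: "p \<ge> 1"
  shows "\<exists>m. nash_eq p R m \<and> chi_BF p m = degen (Maj p R)"
proof -
  let ?x = "Maj p R"
  obtain S where S: "S \<subseteq> {i\<in>agents p. top (R i) = ?x}" "card S = p + 1" and fin: "finite S"
    using obtain_subset_with_card_n[OF card_top_Maj] by blast
  then have SI: "S \<subseteq> agents p" by blast
  obtain s0 where s0: "s0 \<in> S" using S(2) by fastforce
  define m :: "nat \<Rightarrow> message" where "m = (\<lambda>j. (?x, S - {if j \<in> S then j else s0}))"
  have v: "valid_msgs p m" unfolding valid_msgs_def
  proof
    fix i assume "i \<in> agents p"
    have "(if i \<in> S then i else s0) \<in> S" using s0 by simp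
    then show "m i \<in> msg_space p i" using S(2) fin SI by (auto simp: m_def msg_space_def)
  qed
  have bS: "is_bloc p m ?x S" unfolding is_bloc_iff[OF v] using SI s0 by (auto simp: m_def)
  have "nash_eq p R m" unfolding nash_eq_def
  proof (intro conjI v ballI)
    fix i mi assume i: "i \<in> agents p" and ms: "mi \<in> msg_space p i"
    show "\<not> chi_BF p m (top (R i)) < chi_BF p (m(i := mi)) (top (R i))"
    proof (cases "i \<in> S")
      case True
      then have "chi_BF p m (top (R i)) = 1" using S(1) chi_BF_bloc[OF bS] by (auto simp: degen_def)
      then show ?thesis using chi_BF_le_1[OF valid_msgs_fun_upd[OF v ms] p] by (simp add: not_less)
    next
      case False
      then have "is_bloc p (m(i := mi)) ?x S" using bS unfolding is_bloc_def by auto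
      then show ?thesis using chi_BF_bloc[OF bS] chi_BF_bloc by simp
    qed
  qed
  then show ?thesis using chi_BF_bloc[OF bS] by blast
qed

theorem proposition1:
  fixes p :: nat
  assumes "p \<ge> 1"
  shows "\<forall>R. profile p R \<longrightarrow>
           (\<forall>m. nash_eq p R m \<longrightarrow> chi_BF p m = degen (Maj p R)) \<and>
           (\<exists>m. nash_eq p R m \<and> chi_BF p m = degen (Maj p R))"
proof (intro allI impI conjI)
  fix R m
  assume ne: "nash_eq p R m"
  then obtain w B where b: "is_bloc p m w B" using nash_eq_has_bloc[OF _ assms] by blast
  then have "w = Maj p R" by (rule nash_eq_bloc_Maj[OF ne assms])
  with b show "chi_BF p m = degen (Maj p R)" by (simp add: chi_BF_bloc)
next
  fix R
  show "\<exists>m. nash_eq p R m \<and> chi_BF p m = degen (Maj p R)" by (rule nash_eq_exists[OF assms])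
qed

end
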